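(* There is a constant $C>0$ such that $f^{\Delta_n}_{d_n}=O(C^{d_n})$ as $n\to\infty$.
   Context: For a squarefree positive integer $k$ let $P(k)$ be its set of prime factors ($P(1)=\emptyset$). $\Delta_n$ is the abstract simplicial complex $\{P(k):1\le k\le n,\ k\text{ squarefree}\}$; a $d$-simplex is a member of cardinality $d+1$, $d_n=\dim\Delta_n$ is the largest such $d$, and $f^{\Delta_n}_{d_n}$ is the number of $d_n$-simplices of $\Delta_n$ (i.e. the number of squarefree $m\le n$ with exactly $d_n+1$ prime factors). *)

theory Defs
  imports "HOL-Computational_Algebra.Squarefree" "HOL-Library.Landau_Symbols"
begin

definition Delta :: "nat \<Rightarrow> nat set set" where
  "Delta n = {prime_factors k | k. 1 \<le> k \<and> k \<le> n \<and> squarefree k}"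

text \<open>Dimension d_n: largest d such that Delta_n has a member of cardinality d+1
  (for n = 1 the true value -1 is truncated to 0; irrelevant asymptotically).\<close>
definition dimDelta :: "nat \<Rightarrow> nat" where
  "dimDelta n = Max (card ` Delta n) - 1"

definition ftop :: "nat \<Rightarrow> nat" where
  "ftop n = card {s \<in> Delta n. card s = dimDelta n + 1}"

end

theory Submission
  imports Defs "HOL-Library.Infinite_Set"
begin

(* A top-dimensional simplex of Delta_n is the set {p_j | j in J} of prime factors of a squarefree
   m <= n with k = d_n + 1 prime factors, and n < p_0 * ... * p_k, since otherwise these k + 1
   primes would span a larger simplex. Chebyshev's estimate p_j ~ j log j turns
   prod_{j in J} p_j < p_0 * ... * p_k into prod_{j in J} (j + 1) <= C^k * k!. Such a J is
   determined by its part below 2k (at most 4^k choices) and its tail A, which satisfies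
   prod_{j in A} (j + 1)/k <= C^k; by Rankin's trick there are at most
   C^(2k) * exp (sum_{j >= 2k} k^2/(j + 1)^2) <= C^(2k) * e^(k/2) such tails. *)

section \<open>The sequence of primes\<close>

(* Indexed from 0: nth_prime 0 = 2. *)
definition nth_prime :: "nat \<Rightarrow> nat" where
  "nth_prime = enumerate {p. prime p}"

lemma prime_nth_prime: "prime (nth_prime i)"
  unfolding nth_prime_def using enumerate_in_set[OF primes_infinite] by simp

lemma strict_mono_nth_prime: "strict_mono nth_prime"
  unfolding nth_prime_def by (rule strict_mono_enumerate[OF primes_infinite])

lemma nth_prime_less_iff: "nth_prime i < nth_prime j \<longleftrightarrow> i < j"
  using strict_mono_less[OF strict_mono_nth_prime] .

lemma nth_prime_le_iff: "nth_prime i \<le> nth_prime j \<longleftrightarrow> i \<le> j"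
  using strict_mono_less_eq[OF strict_mono_nth_prime] .

lemma inj_nth_prime: "inj nth_prime"
  using strict_mono_imp_inj_on[OF strict_mono_nth_prime] .

lemma range_nth_prime: "range nth_prime = {p. prime p}"
  unfolding nth_prime_def by (rule range_enumerate[OF primes_infinite])

lemma image_vimage_nth_prime: "s \<subseteq> {p. prime p} \<Longrightarrow> nth_prime ` (nth_prime -` s) = s"
  by (simp add: image_vimage_eq range_nth_prime Int_absorb2)

lemma nth_prime_ge: "i + 2 \<le> nth_prime i"
proof (induction i)
  case 0
  have "2 \<le> nth_prime 0"
    by (rule prime_ge_2_nat[OF prime_nth_prime])
  then show ?case by simp
next
  case (Suc i)
  then show ?case using nth_prime_less_iff[of i "Suc i"] by simp
qed

lemma primes_less_nth_prime: "{p. prime p \<and> p < nth_prime i} = nth_prime ` {..<i}"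
proof
  show "{p. prime p \<and> p < nth_prime i} \<subseteq> nth_prime ` {..<i}"
  proof
    fix p assume p: "p \<in> {p. prime p \<and> p < nth_prime i}"
    then obtain j where "p = nth_prime j"
      using range_nth_prime by blast
    with p show "p \<in> nth_prime ` {..<i}"
      by (auto simp: nth_prime_less_iff)
  qed
qed (auto simp: nth_prime_less_iff prime_nth_prime)

lemma card_primes_less_nth_prime: "card {p. prime p \<and> p < nth_prime i} = i"
  unfolding primes_less_nth_prime
  by (simp add: card_image inj_on_subset[OF inj_nth_prime])

section \<open>Chebyshev's bounds\<close>

lemma prod_primes_dvd:
  fixes A :: "nat set"
  assumes "finite A" "\<And>p. p \<in> A \<Longrightarrow> prime p" "\<And>p. p \<in> A \<Longrightarrow> p dvd n"
  shows "\<Prod>A dvd n"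
  using assms
proof (induction A rule: finite_induct)
  case empty
  then show ?case by simp
next
  case (insert p A)
  have "prime p" "p dvd n" "\<Prod>A dvd n"
    using insert by auto
  moreover have "\<not> p dvd \<Prod>A"
  proof
    assume "p dvd \<Prod>A"
    then obtain a where "a \<in> A" "p dvd a"
      using prime_dvd_prod_iff[OF insert.hyps(1) \<open>prime p\<close>, of id] by auto
    then have "p = a"
      using insert.prems \<open>prime p\<close> primes_dvd_imp_eq by blast
    with \<open>a \<in> A\<close> insert.hyps(2) show False by simp
  qed
  ultimately have "p * \<Prod>A dvd n"
    by (intro divides_mult) (auto intro: prime_imp_coprime)
  then show ?case
    using insert.hyps by simp
qed

lemma binomial_odd_middle_le: "(2*m+1) choose m \<le> 4^m"
proof -
  have "2 * ((2*m+1) choose m) = (\<Sum>k\<in>{m, m+1}. (2*m+1) choose k)"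
    using binomial_symmetric[of m "2*m+1"] by simp
  also have "\<dots> \<le> (\<Sum>k\<le>2*m+1. (2*m+1) choose k)"
    by (intro sum_mono2) auto
  also have "\<dots> = 2^(2*m+1)"
    by (rule choose_row_sum)
  also have "\<dots> = 2 * 4^m"
    by (simp add: power_mult)
  finally show ?thesis by simp
qed

lemma prod_primes_between_dvd_binomial:
  "\<Prod>{p. prime p \<and> m+1 < p \<and> p \<le> 2*m+1} dvd ((2*m+1) choose m)"
proof (rule prod_primes_dvd)
  fix p assume p: "p \<in> {p. prime p \<and> m+1 < p \<and> p \<le> 2*m+1}"
  then have "prime p" by simp
  have "fact m * fact (m+1) * ((2*m+1) choose m) = (fact (2*m+1) :: nat)"
    using binomial_fact_lemma[of m "2*m+1"] by simp
  moreover have "p dvd fact (2*m+1)" "\<not> p dvd fact m" "\<not> p dvd fact (m+1)"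
    using p by (simp_all only: prime_dvd_fact_iff[OF \<open>prime p\<close>]) simp_all
  ultimately show "p dvd ((2*m+1) choose m)"
    using \<open>prime p\<close> by (metis prime_dvd_mult_iff)
qed auto

lemma prod_primes_odd_le:
  "\<Prod>{p::nat. prime p \<and> p \<le> 2*m+1} \<le> \<Prod>{p. prime p \<and> p \<le> m+1} * 4^m"
proof -
  have "{p. prime p \<and> p \<le> 2*m+1} =
      {p. prime p \<and> p \<le> m+1} \<union> {p. prime p \<and> m+1 < p \<and> p \<le> 2*m+1}"
    by auto
  then have "\<Prod>{p. prime p \<and> p \<le> 2*m+1} =
      \<Prod>{p. prime p \<and> p \<le> m+1} * \<Prod>{p. prime p \<and> m+1 < p \<and> p \<le> 2*m+1}"
    by (simp only:) (rule prod.union_disjoint; auto)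
  also have "\<Prod>{p. prime p \<and> m+1 < p \<and> p \<le> 2*m+1} \<le> (2*m+1) choose m"
    using prod_primes_between_dvd_binomial by (rule dvd_imp_le) simp
  also have "\<dots> \<le> 4^m"
    by (rule binomial_odd_middle_le)
  finally show ?thesis
    by simp
qed

lemma prod_primes_le_four_pow: "\<Prod>{p::nat. prime p \<and> p \<le> n} \<le> 4^n"
proof (induction n rule: less_induct)
  case (less n)
  have "n < 2 \<or> n = 2 \<or> n > 2 \<and> even n \<or> (\<exists>m. n = 2*m+1 \<and> m \<ge> 1)"
    by presburger
  then consider "n < 2" | "n = 2" | "n > 2" "even n" | m where "n = 2*m+1" "m \<ge> 1"
    by blast
  then show ?case
  proof cases
    case 1
    then have "{p::nat. prime p \<and> p \<le> n} = {}"
      by (auto dest: prime_ge_2_nat)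
    then show ?thesis
      by (simp only:) simp
  next
    case 2
    then have "{p::nat. prime p \<and> p \<le> n} = {2}"
      by (auto dest: prime_ge_2_nat)
    then show ?thesis
      using 2 by (simp only:) simp
  next
    case 3
    then have "\<not> prime n"
      using prime_odd_nat[of n] by blast
    then have "prime p \<and> p \<le> n \<longleftrightarrow> prime p \<and> p \<le> n - 1" for p
      by (cases "p = n") auto
    then have "{p::nat. prime p \<and> p \<le> n} = {p. prime p \<and> p \<le> n - 1}"
      by blast
    also have "\<Prod>\<dots> \<le> 4^(n-1)"
      using less 3 by simp
    also have "\<dots> \<le> 4^n"
      by simp
    finally show ?thesis .
  next
    case 4
    have "\<Prod>{p. prime p \<and> p \<le> n} \<le> \<Prod>{p. prime p \<and> p \<le> m+1} * 4^m"
      using prod_primes_odd_le[of m] 4 by simp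
    also have "\<dots> \<le> 4^(m+1) * 4^m"
      by (intro mult_right_mono less.IH) (use 4 in simp_all)
    also have "\<dots> = 4^n"
      using 4 by (simp flip: power_add)
    finally show ?thesis .
  qed
qed

lemma less_prime_power:
  assumes "prime (p::nat)"
  shows "n < p ^ n"
proof -
  have "n < 2 ^ n"
    by (rule less_exp)
  also have "\<dots> \<le> p ^ n"
    using prime_ge_2_nat[OF assms] by (rule power_mono) simp
  finally show ?thesis .
qed

lemma multiplicity_eq_card_prime_power_dvd:
  assumes "prime (p::nat)" "0 < x" "x \<le> N"
  shows "multiplicity p x = card {i \<in> {1..N}. p ^ i dvd x}"
proof -
  have "multiplicity p x < p ^ multiplicity p x"
    using assms(1) by (rule less_prime_power)
  also have "p ^ multiplicity p x \<le> x"
    using assms(2) by (intro dvd_imp_le multiplicity_dvd)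
  finally have "multiplicity p x < x" .
  moreover have iff: "p ^ i dvd x \<longleftrightarrow> i \<le> multiplicity p x" for i
    using assms by (intro power_dvd_iff_le_multiplicity) auto
  ultimately have "{i \<in> {1..N}. p ^ i dvd x} = {1..multiplicity p x}"
    using assms(3) by (simp only: iff) auto
  then show ?thesis by simp
qed

text \<open>Legendre's formula, with the sum allowed to run beyond \<open>n\<close>.\<close>
lemma multiplicity_fact_nat:
  assumes "prime p" "n \<le> N"
  shows "multiplicity p (fact n :: nat) = (\<Sum>i\<in>{1..N}. n div p ^ i)"
  using assms(2)
proof (induction n)
  case 0
  then show ?case by simp
next
  case (Suc n)
  have "multiplicity p (fact (Suc n) :: nat) = multiplicity p (Suc n * fact n)"
    by simp
  also have "\<dots> = multiplicity p (Suc n) + multiplicity p (fact n :: nat)"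
    using assms(1) by (intro prime_elem_multiplicity_mult_distrib) auto
  also have "multiplicity p (Suc n) = (\<Sum>i\<in>{1..N}. if p ^ i dvd Suc n then 1 else 0)"
    using multiplicity_eq_card_prime_power_dvd[OF assms(1), of "Suc n" N] Suc.prems
    by (simp add: sum.If_cases Int_def)
  also have "multiplicity p (fact n :: nat) = (\<Sum>i\<in>{1..N}. n div p ^ i)"
    using Suc by simp
  also have "(\<Sum>i\<in>{1..N}. if p ^ i dvd Suc n then 1 else 0) + (\<Sum>i\<in>{1..N}. n div p ^ i) =
      (\<Sum>i\<in>{1..N}. Suc n div p ^ i)"
    by (subst sum.distrib[symmetric], intro sum.cong refl) (auto simp: div_Suc dvd_eq_mod_eq_0)
  finally show ?case .
qed

lemma multiplicity_central_binomial:
  assumes "prime p"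
  shows "multiplicity p ((2*m) choose m) + 2 * (\<Sum>i\<in>{1..2*m}. m div p ^ i) =
    (\<Sum>i\<in>{1..2*m}. (2*m) div p ^ i)"
proof -
  have "fact m * fact m * ((2*m) choose m) = (fact (2*m) :: nat)"
    using binomial_fact_lemma[of m "2*m"] by simp
  then have "multiplicity p (fact (2*m) :: nat) = multiplicity p (fact m * fact m * ((2*m) choose m))"
    by simp
  also have "\<dots> = 2 * multiplicity p (fact m :: nat) + multiplicity p ((2*m) choose m)"
    using assms by (simp add: prime_elem_multiplicity_mult_distrib)
  finally have "multiplicity p (fact (2*m) :: nat) =
      2 * multiplicity p (fact m :: nat) + multiplicity p ((2*m) choose m)" .
  then show ?thesis
    using multiplicity_fact_nat[OF assms, of m "2*m"] multiplicity_fact_nat[OF assms, of "2*m" "2*m"]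
    by simp
qed

lemma double_div_le: "(2 * m) div q \<le> 2 * (m div q) + (1::nat)"
proof (cases "q = 0")
  case False
  have "m = m div q * q + m mod q"
    by simp
  moreover have "m mod q < q"
    using False by simp
  ultimately have "2 * m < 2 * (m div q * q) + 2 * q"
    by linarith
  then have "2 * m < (2 * (m div q) + 2) * q"
    by (simp add: algebra_simps)
  then have "2 * m div q < 2 * (m div q) + 2"
    by (rule less_mult_imp_div_less)
  then show ?thesis
    by simp
qed simp

lemma prime_power_multiplicity_central_binomial_le:
  assumes p: "prime (p::nat)" and m: "m \<ge> 1"
  shows "p ^ multiplicity p ((2*m) choose m) \<le> 2*m"
proof -
  have p2: "p \<ge> 2"
    using p by (rule prime_ge_2_nat)
  obtain e where e: "p ^ e \<le> 2*m" "2*m < p ^ (e+1)"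
    using ex_power_ivl1[OF p2, of "2*m"] m by auto
  have "(2*m) div p ^ i \<le> 2 * (m div p ^ i) + (if i \<le> e then 1 else 0)" for i
  proof (cases "i \<le> e")
    case False
    then have "p ^ (e+1) \<le> p ^ i"
      using p2 by (intro power_increasing) auto
    then show ?thesis
      using e by simp
  qed (use double_div_le[of m "p ^ i"] in simp)
  then have "(\<Sum>i\<in>{1..2*m}. (2*m) div p ^ i) \<le>
      (\<Sum>i\<in>{1..2*m}. 2 * (m div p ^ i) + (if i \<le> e then 1 else 0))"
    by (intro sum_mono)
  also have "\<dots> = 2 * (\<Sum>i\<in>{1..2*m}. m div p ^ i) + card ({1..2*m} \<inter> {i. i \<le> e})"
    by (simp add: sum.distrib sum_distrib_left sum.If_cases)
  also have "card ({1..2*m} \<inter> {i. i \<le> e}) \<le> card {1..e}"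
    by (intro card_mono) auto
  finally have "multiplicity p ((2*m) choose m) \<le> e"
    using multiplicity_central_binomial[OF p, of m] by simp
  then have "p ^ multiplicity p ((2*m) choose m) \<le> p ^ e"
    using p2 by (intro power_increasing) auto
  then show ?thesis
    using e by simp
qed

lemma central_binomial_le_power_card_primes:
  assumes "m \<ge> 1"
  shows "(2*m) choose m \<le> (2*m) ^ card {p::nat. prime p \<and> p \<le> 2*m}"
proof -
  define c where "c = (2*m) choose m"
  have "c \<noteq> 0"
    unfolding c_def by simp
  have "prime_factors c \<subseteq> {p. prime p \<and> p \<le> 2*m}"
  proof
    fix p assume "p \<in> prime_factors c"
    then have "prime p" "multiplicity p c \<ge> 1"
      using \<open>c \<noteq> 0\<close> by (auto simp: prime_factors_multiplicity)
    then have "p ^ 1 \<le> p ^ multiplicity p c"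
      using prime_ge_1_nat[OF \<open>prime p\<close>] by (intro power_increasing) auto
    also have "\<dots> \<le> 2*m"
      unfolding c_def using \<open>prime p\<close> assms by (rule prime_power_multiplicity_central_binomial_le)
    finally show "p \<in> {p. prime p \<and> p \<le> 2*m}"
      using \<open>prime p\<close> by simp
  qed
  have "c = (\<Prod>p\<in>prime_factors c. p ^ multiplicity p c)"
    using prod_prime_factors[OF \<open>c \<noteq> 0\<close>] by simp
  also have "\<dots> \<le> (\<Prod>p\<in>prime_factors c. 2*m)"
    unfolding c_def
    by (intro prod_mono) (auto intro: prime_power_multiplicity_central_binomial_le[OF _ assms])
  also have "\<dots> = (2*m) ^ card (prime_factors c)"
    by simp
  also have "\<dots> \<le> (2*m) ^ card {p::nat. prime p \<and> p \<le> 2*m}"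
    using assms \<open>prime_factors c \<subseteq> _\<close> by (intro power_increasing card_mono) auto
  finally show ?thesis
    unfolding c_def .
qed

lemma four_pow_le_power_card_primes:
  assumes "m \<ge> 1"
  shows "4^m \<le> (2*m) ^ (card {p::nat. prime p \<and> p \<le> 2*m} + 1)"
proof -
  have "real (4^m) \<le> real (((2*m) choose m) * (2*m))"
    using central_binomial_lower_bound[of m] assms by (simp add: field_simps)
  then have "4^m \<le> ((2*m) choose m) * (2*m)"
    by linarith
  also have "\<dots> \<le> (2*m) ^ card {p::nat. prime p \<and> p \<le> 2*m} * (2*m)"
    using central_binomial_le_power_card_primes[OF assms] by simp
  finally show ?thesis
    by (simp only: power_add power_one_right)
qed

lemma power_le_four_pow_nth_prime:
  assumes "m \<le> j"
  shows "(m+2) ^ (j+1-m) \<le> 4 ^ nth_prime j"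
proof -
  have "(m+2) ^ (j+1-m) = (\<Prod>i\<in>{m..j}. m+2)"
    by simp
  also have "\<dots> \<le> (\<Prod>i\<in>{m..j}. nth_prime i)"
  proof (rule prod_mono)
    fix i assume "i \<in> {m..j}"
    then have "nth_prime m \<le> nth_prime i"
      by (simp add: nth_prime_le_iff)
    then show "0 \<le> m+2 \<and> m+2 \<le> nth_prime i"
      using nth_prime_ge[of m] by simp
  qed
  also have "\<dots> = \<Prod>(nth_prime ` {m..j})"
    by (simp add: prod.reindex inj_on_subset[OF inj_nth_prime])
  also have "\<dots> \<le> \<Prod>{p. prime p \<and> p \<le> nth_prime j}"
    by (intro dvd_imp_le prod_dvd_prod_subset)
      (auto simp: nth_prime_le_iff prime_nth_prime prime_gt_0_nat)
  also have "\<dots> \<le> 4 ^ nth_prime j"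
    by (rule prod_primes_le_four_pow)
  finally show ?thesis .
qed

lemma ln_2_ge_half: "1/2 \<le> ln (2::real)"
  using ln_add1_ge[of 1] by simp

lemma ln_4_le_2: "ln (4::real) \<le> 2"
proof -
  have "ln (4::real) = 2 * ln 2"
    using ln_realpow[of 2 2] by simp
  then show ?thesis
    using ln_2_less_1 by simp
qed

lemma ln_le_two_ln_half: "ln (real j + 2) \<le> 2 * ln (real ((j+1) div 2) + 2)"
proof -
  define m where "m = (j+1) div 2"
  have "real j + 2 \<le> (real j / 2 + 2)^2"
    by (simp add: power2_eq_square field_simps)
  also have "\<dots> \<le> (real m + 2)^2"
  proof (intro power_mono)
    have "j \<le> 2*m"
      unfolding m_def by presburger
    then have "real j \<le> real (2*m)"
      by (simp only: of_nat_le_iff)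
    then show "real j / 2 + 2 \<le> real m + 2"
      by simp
  qed simp
  finally have "ln (real j + 2) \<le> ln ((real m + 2)^2)"
    by (intro ln_mono) auto
  then show ?thesis
    unfolding m_def by (simp add: ln_realpow)
qed

lemma nth_prime_lower_bound: "real (j+1) * ln (real j + 2) \<le> 8 * real (nth_prime j)"
proof -
  define m where "m = (j+1) div 2"
  have "real ((m+2) ^ (j+1-m)) \<le> real (4 ^ nth_prime j)"
    unfolding m_def of_nat_le_iff by (rule power_le_four_pow_nth_prime) simp
  then have "ln (real ((m+2) ^ (j+1-m))) \<le> ln (real (4 ^ nth_prime j))"
    by (intro ln_mono) auto
  then have primes: "real (j+1-m) * ln (real m + 2) \<le> real (nth_prime j) * ln 4"
    by (simp add: ln_realpow add.commute)
  have count: "real (j+1) / 2 \<le> real (j+1-m)"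
  proof -
    have "j+1 \<le> 2*(j+1-m)"
      unfolding m_def by presburger
    then have "real (j+1) \<le> real (2*(j+1-m))"
      by (simp only: of_nat_le_iff)
    then show ?thesis
      by simp
  qed
  have size: "ln (real j + 2) / 2 \<le> ln (real m + 2)"
    using ln_le_two_ln_half[of j] unfolding m_def by simp
  have "real (j+1) / 2 * (ln (real j + 2) / 2) \<le> real (j+1-m) * ln (real m + 2)"
    using count size by (intro mult_mono) auto
  also have "\<dots> \<le> real (nth_prime j) * ln 4"
    by (rule primes)
  also have "\<dots> \<le> real (nth_prime j) * 2"
    using ln_4_le_2 by (intro mult_left_mono) auto
  finally show ?thesis
    by simp
qed

lemma half_le_Suc_mult_ln: "1/2 \<le> real (i+1) * ln (real i + 2)"
proof -
  have "ln 2 \<le> ln (real i + 2)"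
    by (intro ln_mono) auto
  then have "1/2 \<le> ln (real i + 2)"
    using ln_2_ge_half by linarith
  then have "1 * (1/2) \<le> real (i+1) * ln (real i + 2)"
    by (intro mult_mono) auto
  then show ?thesis
    by simp
qed

lemma four_pow_le_of_less_nth_prime:
  assumes "m \<ge> 1" "2*m < nth_prime i"
  shows "4^m \<le> (2*m) ^ (i+1)"
proof -
  have "{p. prime p \<and> p \<le> 2*m} \<subseteq> {p. prime p \<and> p < nth_prime i}"
    using assms(2) by auto
  then have "card {p. prime p \<and> p \<le> 2*m} \<le> i"
    using card_mono[of "{p. prime p \<and> p < nth_prime i}"] card_primes_less_nth_prime[of i]
    by (simp add: primes_less_nth_prime)
  then have "(2*m) ^ (card {p::nat. prime p \<and> p \<le> 2*m} + 1) \<le> (2*m) ^ (i+1)"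
    using assms(1) by (intro power_increasing) auto
  then show ?thesis
    using four_pow_le_power_card_primes[OF assms(1)] le_trans by blast
qed

lemma double_power_less_four_pow:
  fixes i m :: nat
  defines "x \<equiv> 15 * (real (i+1) * ln (real i + 2))"
  assumes "x \<le> real m" "real m < x + 1"
  shows "(2*m) ^ (i+1) < 4^m"
proof -
  define L where "L = ln (real i + 2)"
  have "ln 2 \<le> L"
    unfolding L_def by (intro ln_mono) auto
  have "1 \<le> real m"
    using assms(2) half_le_Suc_mult_ln[of i] unfolding x_def by linarith
  have "L \<le> real i + 2"
    unfolding L_def using ln_le_minus_one[of "real i + 2"] by simp
  then have "real (i+1) * L \<le> (real i + 2)^2"
    unfolding power2_eq_square L_def by (intro mult_mono) auto
  moreover have "1 \<le> (real i + 2)^2"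
    by (simp add: one_le_power)
  ultimately have "2 * real m \<le> 32 * (real i + 2)^2"
    using assms(3) unfolding x_def L_def by linarith
  then have "ln (2 * real m) \<le> ln (32 * (real i + 2)^2)"
    using \<open>1 \<le> real m\<close> by (intro ln_mono) auto
  also have "\<dots> = 5 * ln 2 + 2 * L"
    using ln_realpow[of 2 5] unfolding L_def by (simp add: ln_mult ln_realpow)
  also have "\<dots> \<le> 7 * L"
    using \<open>ln 2 \<le> L\<close> by simp
  finally have "real (i+1) * ln (2 * real m) \<le> real (i+1) * (7 * L)"
    by (intro mult_left_mono) auto
  also have "\<dots> < real m"
    using assms(2) half_le_Suc_mult_ln[of i] unfolding x_def L_def by simp
  also have "\<dots> \<le> real m * ln 4"
    using \<open>1 \<le> real m\<close> ln_2_ge_half ln_realpow[of 2 2] by simp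
  finally have "real (i+1) * ln (2 * real m) < real m * ln 4" .
  moreover have "0 < 2 * real m"
    using \<open>1 \<le> real m\<close> by simp
  ultimately have "ln ((2 * real m) ^ (i+1)) < ln (4 ^ m)"
    by (simp only: ln_realpow zero_less_numeral)
  then have "(2 * real m) ^ (i+1) < 4 ^ m"
    using \<open>0 < 2 * real m\<close> by (subst (asm) ln_less_cancel_iff) auto
  then have "real ((2*m) ^ (i+1)) < real (4 ^ m)"
    by simp
  then show ?thesis
    by (simp only: of_nat_less_iff)
qed

lemma nth_prime_upper_bound: "real (nth_prime i) \<le> 34 * (real (i+1) * ln (real i + 2))"
proof -
  define x where "x = 15 * (real (i+1) * ln (real i + 2))"
  define m where "m = nat \<lceil>x\<rceil>"
  have "0 \<le> x"
    unfolding x_def by simp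
  then have "real m = of_int \<lceil>x\<rceil>"
    unfolding m_def by simp
  then have m: "x \<le> real m" "real m < x + 1"
    using ceiling_correct[of x] by linarith+
  have "nth_prime i \<le> 2*m"
  proof (rule ccontr)
    assume "\<not> nth_prime i \<le> 2*m"
    moreover have "m \<ge> 1"
      using m half_le_Suc_mult_ln[of i] unfolding x_def by linarith
    ultimately have "4^m \<le> (2*m) ^ (i+1)"
      by (intro four_pow_le_of_less_nth_prime) auto
    then show False
      using double_power_less_four_pow[of i m] m unfolding x_def by simp
  qed
  then have "real (nth_prime i) \<le> 2 * x + 2"
    using m by linarith
  then show ?thesis
    using half_le_Suc_mult_ln[of i] unfolding x_def by linarith
qed

section \<open>Counting sets of indices\<close>

lemma prod_lessThan_card_le_prod:
  fixes f :: "nat \<Rightarrow> real"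
  assumes "mono f" "\<And>i. 0 \<le> f i" "finite J"
  shows "(\<Prod>i<card J. f i) \<le> (\<Prod>j\<in>J. f j)"
  using assms(3)
proof (induction "card J" arbitrary: J)
  case 0
  then show ?case by simp
next
  case (Suc k J)
  define m where "m = Max J"
  have "J \<noteq> {}"
    using Suc.hyps(2) by auto
  then have "m \<in> J"
    unfolding m_def using Max_in[OF Suc.prems] by blast
  have "card J \<le> card {..m}"
    unfolding m_def using Max_ge[OF Suc.prems] by (intro card_mono) auto
  then have "k \<le> m"
    using Suc.hyps(2) by simp
  have "(\<Prod>i<card J. f i) = (\<Prod>i<k. f i) * f k"
    using Suc.hyps(2)[symmetric] by simp
  also have "\<dots> \<le> (\<Prod>j\<in>J - {m}. f j) * f m"
  proof (intro mult_mono prod_nonneg)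
    have "k = card (J - {m})"
      using Suc.hyps(2) Suc.prems \<open>m \<in> J\<close> by simp
    then show "(\<Prod>i<k. f i) \<le> (\<Prod>j\<in>J - {m}. f j)"
      using Suc.hyps(1) Suc.prems by blast
    show "f k \<le> f m"
      using assms(1) \<open>k \<le> m\<close> by (rule monoD)
  qed (use assms(2) in auto)
  also have "\<dots> = (\<Prod>j\<in>J. f j)"
    using prod.remove[OF Suc.prems \<open>m \<in> J\<close>, of f] by (simp add: mult.commute)
  finally show ?case .
qed

lemma fact_card_le_prod_Suc: "finite J \<Longrightarrow> fact (card J) \<le> (\<Prod>j\<in>J. real (j+1))"
  using prod_lessThan_card_le_prod[of "\<lambda>i. real (i+1)" J]
  by (simp add: fact_prod_Suc atLeast0LessThan mono_def)

lemma fact_le_fact_diff_mult_pow: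
  assumes "r \<le> k"
  shows "fact k \<le> fact (k - r) * (k::nat) ^ r"
proof -
  have "(fact k :: nat) = fact (k - r) * (fact k div fact (k - r))"
    by (simp add: fact_dvd)
  also have "\<dots> \<le> fact (k - r) * k ^ r"
    using fact_div_fact_le_pow[OF assms] by (intro mult_le_mono2)
  finally show ?thesis .
qed

text \<open>Rankin's trick: each counted set \<open>A\<close> satisfies \<open>1 \<le> (Y / (\<Prod>j\<in>A. a j)) ^ s\<close>.\<close>
lemma card_subsets_prod_le:
  fixes a :: "'a \<Rightarrow> real"
  assumes "finite R" "\<And>j. j \<in> R \<Longrightarrow> 0 < a j" "0 \<le> Y"
  shows "real (card {A \<in> Pow R. (\<Prod>j\<in>A. a j) \<le> Y}) \<le> Y ^ s * exp (\<Sum>j\<in>R. 1 / a j ^ s)"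
proof -
  define G where "G = {A \<in> Pow R. (\<Prod>j\<in>A. a j) \<le> Y}"
  have "real (card G) = (\<Sum>A\<in>G. 1)"
    by simp
  also have "\<dots> \<le> (\<Sum>A\<in>G. Y ^ s * (\<Prod>j\<in>A. 1 / a j ^ s))"
  proof (rule sum_mono)
    fix A assume "A \<in> G"
    then have "A \<subseteq> R" "(\<Prod>j\<in>A. a j) \<le> Y"
      unfolding G_def by auto
    moreover have "0 < (\<Prod>j\<in>A. a j)"
      using \<open>A \<subseteq> R\<close> assms(2) by (intro prod_pos) auto
    ultimately have "1 \<le> (Y / (\<Prod>j\<in>A. a j)) ^ s"
      by (intro one_le_power) simp
    also have "\<dots> = Y ^ s * (\<Prod>j\<in>A. 1 / a j ^ s)"
      by (simp add: power_divide prod_dividef prod_power_distrib)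
    finally show "1 \<le> Y ^ s * (\<Prod>j\<in>A. 1 / a j ^ s)" .
  qed
  also have "\<dots> \<le> (\<Sum>A\<in>Pow R. Y ^ s * (\<Prod>j\<in>A. 1 / a j ^ s))"
  proof (rule sum_mono2)
    fix A assume "A \<in> Pow R - G"
    then show "0 \<le> Y ^ s * (\<Prod>j\<in>A. 1 / a j ^ s)"
      using assms(2,3) by (intro mult_nonneg_nonneg prod_nonneg) (auto simp: less_imp_le)
  qed (use assms(1) in \<open>auto simp: G_def\<close>)
  also have "\<dots> = Y ^ s * (\<Prod>j\<in>R. 1 / a j ^ s + 1)"
    using prod_add[OF assms(1), of "\<lambda>j. 1 / a j ^ s" "\<lambda>_. 1"] by (simp add: sum_distrib_left)
  also have "\<dots> \<le> Y ^ s * (\<Prod>j\<in>R. exp (1 / a j ^ s))"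
  proof (intro mult_left_mono prod_mono conjI)
    fix j assume "j \<in> R"
    then have "0 \<le> 1 / a j ^ s"
      using assms(2) by (simp add: less_imp_le)
    then show "0 \<le> 1 / a j ^ s + 1"
      by simp
    show "1 / a j ^ s + 1 \<le> exp (1 / a j ^ s)"
      using exp_ge_add_one_self by (simp add: add.commute)
  qed (use assms(3) in simp)
  also have "\<dots> = Y ^ s * exp (\<Sum>j\<in>R. 1 / a j ^ s)"
    using assms(1) by (simp add: exp_sum)
  finally show ?thesis
    unfolding G_def .
qed

lemma sum_inverse_square_tail_le:
  assumes "k \<ge> 1"
  shows "(\<Sum>j\<in>{2*k..<B}. 1 / (real (j+1) / real k) ^ 2) \<le> real k / 2"
proof -
  have "(\<Sum>j\<in>{2*k..<B}. 1 / (real (j+1) / real k) ^ 2) \<le>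
      (\<Sum>j\<in>{2*k..<B}. real k ^ 2 * (1 / real j - 1 / real (Suc j)))"
  proof (rule sum_mono)
    fix j assume "j \<in> {2*k..<B}"
    then have "j \<ge> 1"
      using assms by simp
    then have "1 / real (j+1) ^ 2 \<le> 1 / (real j * real (j+1))"
      unfolding power2_eq_square by (intro divide_left_mono mult_right_mono) auto
    also have "\<dots> = 1 / real j - 1 / real (Suc j)"
      using \<open>j \<ge> 1\<close> by (simp add: field_simps)
    finally have "1 / real (j+1) ^ 2 \<le> 1 / real j - 1 / real (Suc j)" .
    then have "real k ^ 2 * (1 / real (j+1) ^ 2) \<le> real k ^ 2 * (1 / real j - 1 / real (Suc j))"
      by (intro mult_left_mono) auto
    then show "1 / (real (j+1) / real k) ^ 2 \<le> real k ^ 2 * (1 / real j - 1 / real (Suc j))"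
      by (simp add: power_divide)
  qed
  also have "\<dots> \<le> real k ^ 2 * (1 / real (2*k))"
  proof (cases "2*k \<le> B")
    case True
    have "(\<Sum>j\<in>{2*k..<B}. 1 / real j - 1 / real (Suc j)) = 1 / real (2*k) - 1 / real B"
      using sum_Suc_diff'[OF True, of "\<lambda>j. - 1 / real j"] by simp
    then have "(\<Sum>j\<in>{2*k..<B}. 1 / real j - 1 / real (Suc j)) \<le> 1 / real (2*k)"
      by simp
    then show ?thesis
      unfolding sum_distrib_left[symmetric] by (intro mult_left_mono) auto
  qed simp
  also have "\<dots> = real k / 2"
    using assms by (simp add: power2_eq_square)
  finally show ?thesis .
qed

lemma prod_div_card_diff_le:
  assumes "finite J" "card J = k" "(\<Prod>j\<in>J. real (j+1)) \<le> Y * fact k"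
  shows "(\<Prod>j\<in>J - S. real (j+1) / real k) \<le> Y"
proof (cases "k = 0")
  case True
  then show ?thesis
    using assms by simp
next
  case False
  define r where "r = card (J - S)"
  have "card (J \<inter> S) = k - r" "r \<le> k"
    using assms(1,2) card_Int_Diff[of J S] unfolding r_def by auto
  have "0 < (\<Prod>j\<in>J. real (j+1))"
    by (rule prod_pos) simp
  then have "0 < Y * fact k"
    using assms(3) by linarith
  then have "0 < Y"
    by (rule zero_less_mult_pos2) simp
  have "(\<Prod>j\<in>J. real (j+1)) = (\<Prod>j\<in>J \<inter> S. real (j+1)) * (\<Prod>j\<in>J - S. real (j+1))"
    using assms(1) by (rule prod.Int_Diff)
  then have "fact (k - r) * (\<Prod>j\<in>J - S. real (j+1)) \<le> (\<Prod>j\<in>J. real (j+1))"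
    using fact_card_le_prod_Suc[of "J \<inter> S"] assms(1) \<open>card (J \<inter> S) = k - r\<close>
    by (simp add: mult_right_mono prod_nonneg)
  also have "\<dots> \<le> Y * fact k"
    by (rule assms(3))
  also have "\<dots> \<le> Y * (fact (k - r) * real k ^ r)"
  proof -
    have "real (fact k) \<le> real (fact (k - r) * k ^ r)"
      using fact_le_fact_diff_mult_pow[OF \<open>r \<le> k\<close>] by (simp only: of_nat_le_iff)
    then show ?thesis
      using \<open>0 < Y\<close> by (intro mult_left_mono) auto
  qed
  finally have "(\<Prod>j\<in>J - S. real (j+1)) \<le> Y * real k ^ r"
    by (simp add: mult.left_commute)
  moreover have "(\<Prod>j\<in>J - S. real (j+1) / real k) = (\<Prod>j\<in>J - S. real (j+1)) / real k ^ r"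
    by (simp add: prod_dividef r_def)
  ultimately show ?thesis
    using False by (simp add: pos_divide_le_eq)
qed

lemma card_index_sets_le_card_tails:
  "card {J \<in> Pow {..<B}. card J = k \<and> (\<Prod>j\<in>J. real (j+1)) \<le> Y * fact k} \<le>
    4^k * card {A \<in> Pow {2*k..<B}. (\<Prod>j\<in>A. real (j+1) / real k) \<le> Y}"
proof -
  define F where "F = {J \<in> Pow {..<B}. card J = k \<and> (\<Prod>j\<in>J. real (j+1)) \<le> Y * fact k}"
  define G where "G = {A \<in> Pow {2*k..<B}. (\<Prod>j\<in>A. real (j+1) / real k) \<le> Y}"
  define split :: "nat set \<Rightarrow> nat set \<times> nat set" where
    "split J = (J \<inter> {..<2*k}, J - {..<2*k})" for J
  have "split ` F \<subseteq> Pow {..<2*k} \<times> G"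
  proof
    fix P assume "P \<in> split ` F"
    then obtain J where "J \<in> F" "P = split J"
      by blast
    then have "J \<subseteq> {..<B}" "card J = k" "(\<Prod>j\<in>J. real (j+1)) \<le> Y * fact k"
      unfolding F_def by auto
    moreover have "finite J"
      using \<open>J \<subseteq> {..<B}\<close> finite_subset by blast
    ultimately have "J - {..<2*k} \<in> G"
      unfolding G_def using prod_div_card_diff_le[of J k Y "{..<2*k}"] by auto
    then show "P \<in> Pow {..<2*k} \<times> G"
      unfolding \<open>P = split J\<close> split_def by auto
  qed
  moreover have "inj_on split F"
  proof (rule inj_onI)
    fix J J' assume "split J = split J'"
    then show "J = J'"
      unfolding split_def by (simp add: set_eq_iff) blast
  qed
  ultimately have "card F \<le> card (Pow {..<2*k} \<times> G)"
    by (intro card_inj_on_le) (auto simp: G_def)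
  also have "\<dots> = 4^k * card G"
    by (simp add: card_cartesian_product card_Pow power_mult)
  finally show ?thesis
    unfolding F_def G_def .
qed

lemma card_index_sets_le:
  assumes "k \<ge> 1" "0 \<le> Y"
  shows "real (card {J \<in> Pow {..<B}. card J = k \<and> (\<Prod>j\<in>J. real (j+1)) \<le> Y * fact k})
    \<le> (4 * exp (1/2)) ^ k * Y^2"
proof -
  define G where "G = {A \<in> Pow {2*k..<B}. (\<Prod>j\<in>A. real (j+1) / real k) \<le> Y}"
  have "real (card {J \<in> Pow {..<B}. card J = k \<and> (\<Prod>j\<in>J. real (j+1)) \<le> Y * fact k})
      \<le> real (4^k * card G)"
    unfolding G_def of_nat_le_iff by (rule card_index_sets_le_card_tails)
  also have "\<dots> = 4^k * real (card G)"
    by simp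
  also have "real (card G) \<le> Y^2 * exp (\<Sum>j\<in>{2*k..<B}. 1 / (real (j+1) / real k) ^ 2)"
    unfolding G_def using assms by (intro card_subsets_prod_le) auto
  also have "\<dots> \<le> Y^2 * exp (real k * (1/2))"
    using sum_inverse_square_tail_le[OF assms(1), of B] by (intro mult_left_mono) auto
  also have "exp (real k * (1/2)) = exp (1/2) ^ k"
    by (rule exp_of_nat_mult)
  finally show ?thesis
    by (simp add: power_mult_distrib mult_ac)
qed

lemma Suc_square_le_four_pow: "(k+1)^2 \<le> 4^k"
proof (induction k)
  case (Suc k)
  have "(Suc k + 1)^2 \<le> 4 * (k+1)^2"
    by (simp add: power2_eq_square)
  also have "\<dots> \<le> 4 * 4^k"
    using Suc.IH by simp
  finally show ?case
    by simp
qed simp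

lemma prod_nth_primes_le:
  "(\<Prod>i\<le>k. real (nth_prime i)) \<le> 34^(k+1) * fact (k+1) * (\<Prod>i\<le>k. ln (real i + 2))"
proof -
  have "(\<Prod>i\<le>k. real (nth_prime i)) \<le> (\<Prod>i\<le>k. 34 * (real (i+1) * ln (real i + 2)))"
    using nth_prime_upper_bound by (intro prod_mono) auto
  also have "\<dots> = 34^(k+1) * (\<Prod>i\<le>k. real (i+1)) * (\<Prod>i\<le>k. ln (real i + 2))"
    by (simp add: prod.distrib)
  also have "(\<Prod>i\<le>k. real (i+1)) = fact (k+1)"
    by (simp add: fact_prod_Suc atLeast0LessThan lessThan_Suc_atMost)
  finally show ?thesis .
qed

lemma prod_Suc_mult_prod_ln_le:
  assumes "finite J" "card J = k"
  shows "(\<Prod>j\<in>J. real (j+1)) * (\<Prod>i<k. ln (real i + 2)) \<le> 8^k * (\<Prod>j\<in>J. real (nth_prime j))"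
proof -
  have "(\<Prod>i<k. ln (real i + 2)) \<le> (\<Prod>j\<in>J. ln (real j + 2))"
    using prod_lessThan_card_le_prod[of "\<lambda>i. ln (real i + 2)" J] assms
    by (simp add: mono_def)
  then have "(\<Prod>j\<in>J. real (j+1)) * (\<Prod>i<k. ln (real i + 2)) \<le>
      (\<Prod>j\<in>J. real (j+1) * ln (real j + 2))"
    by (simp add: prod.distrib mult_left_mono prod_nonneg)
  also have "\<dots> \<le> (\<Prod>j\<in>J. 8 * real (nth_prime j))"
    using nth_prime_lower_bound by (intro prod_mono) auto
  also have "\<dots> = 8^k * (\<Prod>j\<in>J. real (nth_prime j))"
    using assms(2) by (simp add: prod.distrib)
  finally show ?thesis .
qed

text \<open>The logarithmic factors of the two Chebyshev bounds cancel because the \<open>k\<close>-element set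
  \<open>J\<close> dominates \<open>{..<k}\<close>.\<close>
lemma prod_Suc_le_of_prod_nth_primes_less:
  assumes "finite J" "card J = k" "(\<Prod>j\<in>J. nth_prime j) < (\<Prod>i\<le>k. nth_prime i)"
  shows "(\<Prod>j\<in>J. real (j+1)) \<le> 34 * 1088^k * fact k"
proof -
  define P where "P = (\<Prod>i<k. ln (real i + 2))"
  have "0 < P"
    unfolding P_def by (intro prod_pos) auto
  have "(\<Prod>j\<in>J. real (j+1)) * P \<le> 8^k * (\<Prod>j\<in>J. real (nth_prime j))"
    unfolding P_def using assms(1,2) by (rule prod_Suc_mult_prod_ln_le)
  also have "(\<Prod>j\<in>J. real (nth_prime j)) \<le> (\<Prod>i\<le>k. real (nth_prime i))"
    using assms(3) by (simp flip: of_nat_prod)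
  also have "\<dots> \<le> 34^(k+1) * fact (k+1) * (P * ln (real k + 2))"
    using prod_nth_primes_le[of k] unfolding P_def by (simp add: lessThan_Suc_atMost[symmetric])
  finally have "(\<Prod>j\<in>J. real (j+1)) * P \<le>
      (8^k * 34^(k+1) * fact k * ((real k + 1) * ln (real k + 2))) * P"
    by (simp add: algebra_simps)
  then have "(\<Prod>j\<in>J. real (j+1)) \<le> 8^k * 34^(k+1) * fact k * ((real k + 1) * ln (real k + 2))"
    using \<open>0 < P\<close> by simp
  also have "(real k + 1) * ln (real k + 2) \<le> (real k + 1)^2"
    using ln_le_minus_one[of "real k + 2"] unfolding power2_eq_square
    by (intro mult_left_mono) auto
  also have "(real k + 1)^2 \<le> 4^k"
    using Suc_square_le_four_pow[of k]
    by (metis of_nat_Suc of_nat_le_iff of_nat_numeral of_nat_power Suc_eq_plus1 add.commute)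
  also have "8^k * 34^(k+1) * fact k * 4^k = 34 * 1088^k * (fact k :: real)"
    by (simp add: power_mult_distrib[symmetric])
  finally show ?thesis
    by simp
qed

section \<open>Top-dimensional simplices of \<open>Delta n\<close>\<close>

lemma finite_Delta: "finite (Delta n)"
proof -
  have "Delta n = prime_factors ` {k. 1 \<le> k \<and> k \<le> n \<and> squarefree k}"
    unfolding Delta_def by auto
  then show ?thesis
    by simp
qed

lemma prod_prime_factors_squarefree:
  assumes "squarefree (m::nat)"
  shows "\<Prod>(prime_factors m) = m"
proof -
  have "m \<noteq> 0"
    using assms by (metis not_squarefree_0)
  then have "m = (\<Prod>p\<in>prime_factors m. p ^ multiplicity p m)"
    using prod_prime_factors[OF \<open>m \<noteq> 0\<close>] by simp
  also have "\<dots> = (\<Prod>p\<in>prime_factors m. p)"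
    using assms \<open>m \<noteq> 0\<close> by (intro prod.cong refl) (simp add: squarefree_factorial_semiring')
  finally show ?thesis
    by simp
qed

lemma nth_primes_in_Delta:
  assumes "finite I" "(\<Prod>i\<in>I. nth_prime i) \<le> n"
  shows "nth_prime ` I \<in> Delta n"
proof -
  have "0 \<notin> nth_prime ` I"
    using nth_prime_ge by (metis image_iff add_is_0 le_zero_eq zero_neq_numeral)
  then have "prime_factors (\<Prod>i\<in>I. nth_prime i) = nth_prime ` I"
    using assms(1) by (simp add: prime_factors_prod prime_nth_prime prime_prime_factors) blast
  moreover have "squarefree (\<Prod>i\<in>I. nth_prime i)"
  proof (rule squarefree_prod_coprime)
    fix a b assume "a \<in> I" "b \<in> I" "a \<noteq> b"
    then have "nth_prime a \<noteq> nth_prime b"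
      using inj_nth_prime by (auto dest: injD)
    then show "coprime (nth_prime a) (nth_prime b)"
      by (intro primes_coprime prime_nth_prime)
  qed (simp add: squarefree_prime prime_nth_prime)
  moreover have "1 \<le> (\<Prod>i\<in>I. nth_prime i)"
    by (simp add: Suc_le_eq prime_gt_0_nat prime_nth_prime prod_pos)
  ultimately show ?thesis
    unfolding Delta_def using assms(2) by (metis (mono_tags, lifting) mem_Collect_eq)
qed

lemma less_prod_nth_primes_if_top_simplex:
  assumes "s \<in> Delta n" "card s = dimDelta n + 1"
  shows "n < (\<Prod>i\<le>card s. nth_prime i)"
proof (rule ccontr)
  assume "\<not> n < (\<Prod>i\<le>card s. nth_prime i)"
  then have "nth_prime ` {..card s} \<in> Delta n"
    by (intro nth_primes_in_Delta) auto
  moreover have "card (nth_prime ` {..card s}) = card s + 1"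
    by (simp add: card_image inj_on_subset[OF inj_nth_prime])
  ultimately have "card s + 1 \<le> Max (card ` Delta n)"
    using finite_Delta by (metis Max_ge finite_imageI image_eqI)
  moreover have "card s \<le> Max (card ` Delta n)"
    using assms(1) finite_Delta by (intro Max_ge) auto
  ultimately show False
    using assms(2) unfolding dimDelta_def by linarith
qed

lemma Delta_subset_primes: "s \<in> Delta n \<Longrightarrow> s \<subseteq> {p. prime p}"
  unfolding Delta_def by (auto intro: in_prime_factors_imp_prime)

lemma inj_on_vimage_nth_prime_Delta: "inj_on (vimage nth_prime) (Delta n)"
proof (rule inj_onI)
  fix s t assume "s \<in> Delta n" "t \<in> Delta n" "nth_prime -` s = nth_prime -` t"
  then show "s = t"
    using image_vimage_nth_prime[OF Delta_subset_primes] by metis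
qed

lemma index_set_of_simplex:
  assumes "s \<in> Delta n"
  shows "finite (nth_prime -` s)" "card (nth_prime -` s) = card s"
    and "(\<Prod>j\<in>nth_prime -` s. nth_prime j) \<le> n" "nth_prime -` s \<subseteq> {..<n}"
proof -
  obtain m where m: "s = prime_factors m" "1 \<le> m" "m \<le> n" "squarefree m"
    using assms unfolding Delta_def by auto
  have image: "nth_prime ` (nth_prime -` s) = s"
    using Delta_subset_primes[OF assms] by (rule image_vimage_nth_prime)
  have inj: "inj_on nth_prime (nth_prime -` s)"
    using inj_nth_prime by (rule inj_on_subset) simp
  have "finite s"
    using m(1) by simp
  then show "finite (nth_prime -` s)"
    using inj_nth_prime by (rule finite_vimageI)
  show "card (nth_prime -` s) = card s"
    using card_image[OF inj] image by simp
  have "(\<Prod>j\<in>nth_prime -` s. nth_prime j) = \<Prod>s"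
    using prod.reindex[OF inj, of id] image by simp
  also have "\<dots> = m"
    using m(1,4) by (simp add: prod_prime_factors_squarefree)
  finally show "(\<Prod>j\<in>nth_prime -` s. nth_prime j) \<le> n"
    using m(3) by simp
  show "nth_prime -` s \<subseteq> {..<n}"
  proof
    fix j assume "j \<in> nth_prime -` s"
    then have "nth_prime j \<in> prime_factors m"
      using m(1) by simp
    then have "nth_prime j dvd m"
      by (rule in_prime_factors_imp_dvd)
    then have "nth_prime j \<le> m"
      by (rule dvd_imp_le) (use m(2) in simp)
    then have "nth_prime j \<le> n"
      using m(3) by simp
    then show "j \<in> {..<n}"
      using nth_prime_ge[of j] by simp
  qed
qed

lemma index_set_of_top_simplex_le:
  assumes "s \<in> Delta n" "card s = dimDelta n + 1"
  shows "(\<Prod>j\<in>nth_prime -` s. real (j+1)) \<le> 34 * 1088^card s * fact (card s)"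
proof (rule prod_Suc_le_of_prod_nth_primes_less)
  show "(\<Prod>j\<in>nth_prime -` s. nth_prime j) < (\<Prod>i\<le>card s. nth_prime i)"
    using index_set_of_simplex(3)[OF assms(1)] less_prod_nth_primes_if_top_simplex[OF assms]
    by linarith
qed (use index_set_of_simplex[OF assms(1)] in simp_all)

lemma ftop_le: "real (ftop n) \<le> 34^2 * (4 * exp (1/2) * 1088^2) ^ (dimDelta n + 1)"
proof -
  define k where "k = dimDelta n + 1"
  define Y :: real where "Y = 34 * 1088^k"
  define T where "T = {s \<in> Delta n. card s = k}"
  define F where "F = {J \<in> Pow {..<n}. card J = k \<and> (\<Prod>j\<in>J. real (j+1)) \<le> Y * fact k}"
  have "vimage nth_prime ` T \<subseteq> F"
  proof
    fix J assume "J \<in> vimage nth_prime ` T"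
    then obtain s where s: "s \<in> Delta n" "card s = k" and J: "J = nth_prime -` s"
      unfolding T_def by blast
    have "card J = k" "J \<subseteq> {..<n}"
      using index_set_of_simplex(2,4)[OF s(1)] s(2) unfolding J by simp_all
    moreover have "(\<Prod>j\<in>J. real (j+1)) \<le> Y * fact k"
      using index_set_of_top_simplex_le[OF s(1)] s(2) unfolding J Y_def k_def by simp
    ultimately show "J \<in> F"
      unfolding F_def by simp
  qed
  moreover have "inj_on (vimage nth_prime) T"
    using inj_on_vimage_nth_prime_Delta[of n] by (rule inj_on_subset) (simp add: T_def)
  moreover have "finite F"
    unfolding F_def by (rule finite_subset[of _ "Pow {..<n}"]) auto
  ultimately have "card T \<le> card F"
    by (intro card_inj_on_le)
  then have "real (ftop n) \<le> real (card F)"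
    unfolding ftop_def T_def k_def by simp
  also have "\<dots> \<le> (4 * exp (1/2)) ^ k * Y^2"
    unfolding F_def Y_def k_def by (intro card_index_sets_le) auto
  also have "\<dots> = 34^2 * (4 * exp (1/2) * 1088^2) ^ k"
  proof -
    have "((1088::real)^k)^2 = (1088^2)^k"
      by (metis power_mult mult.commute)
    then show ?thesis
      unfolding Y_def power_mult_distrib by simp
  qed
  finally show ?thesis
    unfolding k_def .
qed

theorem proposition3p4:
  shows "\<exists>C::real. C > 0 \<and> (\<lambda>n. real (ftop n)) \<in> O(\<lambda>n. C ^ dimDelta n)"
proof -
  define C :: real where "C = 4 * exp (1/2) * 1088^2"
  have "C > 0"
    unfolding C_def by simp
  have "(\<lambda>n. real (ftop n)) \<in> O(\<lambda>n. C ^ dimDelta n)"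
  proof (rule bigoI)
    show "\<forall>\<^sub>F n in at_top. norm (real (ftop n)) \<le> 34^2 * C * norm (C ^ dimDelta n)"
      using ftop_le \<open>C > 0\<close> unfolding C_def by (intro always_eventually allI) (simp add: mult_ac)
  qed
  with \<open>C > 0\<close> show ?thesis
    by blast
qed

end
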